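(* For integers $n\ge0$ let $Z(n)=\sum_{k=0}^{n}(-3)^{n-3k}\binom{n}{3k}\binom{n+k}{n}\frac{(3k)!}{k!^3}$. Then for every $n\ge0$, $Z(n)$ equals the coefficient of $x_1^nx_2^nx_3^nx_4^n$ in the Taylor expansion of $$\frac{1}{1-(x_1+x_2+x_3+x_4)+27x_1x_2x_3x_4}.$$ *)

theory Defs
  imports Complex_Main "HOL-Computational_Algebra.Formal_Power_Series"
begin

text \<open>Formal power series in four variables x1,x2,x3,x4 over the rationals,
  realised as nested univariate formal power series. x1 is the outermost variable.\<close>

type_synonym fps4 = "rat fps fps fps fps"

definition X1 :: fps4 where "X1 = fps_X"
definition X2 :: fps4 where "X2 = fps_const fps_X"
definition X3 :: fps4 where "X3 = fps_const (fps_const fps_X)"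
definition X4 :: fps4 where "X4 = fps_const (fps_const (fps_const fps_X))"

definition coeff4 :: "fps4 \<Rightarrow> nat \<Rightarrow> nat \<Rightarrow> nat \<Rightarrow> nat \<Rightarrow> rat" where
  "coeff4 G a b c d = fps_nth (fps_nth (fps_nth (fps_nth G a) b) c) d"

text \<open>Taylor expansion of 1/D: the (unique) power series G with G * D = 1.\<close>
definition fps4_inv :: "fps4 \<Rightarrow> fps4" where
  "fps4_inv D = (THE G. G * D = 1)"

definition Zseq :: "nat \<Rightarrow> rat" where
  "Zseq n = (\<Sum>k = 0..n. (-3) powi (int n - 3 * int k) * of_nat (n choose (3*k))
      * of_nat ((n + k) choose n) * of_nat (fact (3*k)) / of_nat (fact k ^ 3))"

end

theory Submission
  imports Defs
begin

text \<open>
  Multiplying by the denominator shows that the coefficient of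
  x1^a x2^b x3^c x4^d in 1/(1 - (x1 + x2 + x3 + x4) + t x1 x2 x3 x4) is
  \<Sum>j (-t)^j (a + b + c + d - 3j)! / (j! (a-j)! (b-j)! (c-j)! (d-j)!), since these numbers
  satisfy the corresponding Pascal-type recurrence. For t = 27 the diagonal coefficients are
  S(n) = \<Sum>m (-27)^(n-m) (n+3m)! / ((n-m)! m!^4). Creative telescoping (with explicit
  Zeilberger certificates) shows that both S and Z are annihilated by the operator
  81(n+1)^3 + (2n+3)(7n^2+21n+17) N + (n+2)^3 N^2, where N is the shift n \<mapsto> n+1, and both
  sequences start with 1, -3.
\<close>

abbreviation const4 :: "rat \<Rightarrow> fps4" where
  "const4 t \<equiv> fps_const (fps_const (fps_const (fps_const t)))"

lemma coeff4_eqI: "(\<And>a b c d. coeff4 F a b c d = coeff4 H a b c d) \<Longrightarrow> F = H"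
  by (intro fps_ext) (simp add: coeff4_def)

lemma coeff4_add [simp]: "coeff4 (F + H) a b c d = coeff4 F a b c d + coeff4 H a b c d"
  and coeff4_diff [simp]: "coeff4 (F - H) a b c d = coeff4 F a b c d - coeff4 H a b c d"
  and coeff4_one [simp]: "coeff4 1 a b c d = (if a = 0 \<and> b = 0 \<and> c = 0 \<and> d = 0 then 1 else 0)"
  and coeff4_const4_mult [simp]: "coeff4 (const4 t * F) a b c d = t * coeff4 F a b c d"
  by (simp_all add: coeff4_def)

lemma coeff4_X_mult [simp]:
  "coeff4 (X1 * F) a b c d = (if a > 0 then coeff4 F (a - 1) b c d else 0)"
  "coeff4 (X2 * F) a b c d = (if b > 0 then coeff4 F a (b - 1) c d else 0)"
  "coeff4 (X3 * F) a b c d = (if c > 0 then coeff4 F a b (c - 1) d else 0)"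
  "coeff4 (X4 * F) a b c d = (if d > 0 then coeff4 F a b c (d - 1) else 0)"
  by (simp_all add: coeff4_def X1_def X2_def X3_def X4_def)

lemma fps4_inv_eqI:
  assumes "G * D = 1"
  shows "fps4_inv D = G"
  unfolding fps4_inv_def
proof (rule the_equality)
  fix G' assume G'_inverse: "G' * D = 1"
  have "G' = G' * (G * D)" using assms by simp
  also have "\<dots> = (G' * D) * G" by (simp only: ac_simps)
  finally show "G' = G" using G'_inverse by simp
qed (fact assms)

definition multinomial5 :: "nat \<Rightarrow> nat \<Rightarrow> nat \<Rightarrow> nat \<Rightarrow> nat \<Rightarrow> rat" where
  "multinomial5 j a b c d = fact (j + a + b + c + d) / (fact j * fact a * fact b * fact c * fact d)"

lemma multinomial5_pred:
  "(if j > 0 then multinomial5 (j - 1) a b c d else 0)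
     = of_nat j * fact (j + a + b + c + d - 1) / (fact j * fact a * fact b * fact c * fact d)"
  "(if a > 0 then multinomial5 j (a - 1) b c d else 0)
     = of_nat a * fact (j + a + b + c + d - 1) / (fact j * fact a * fact b * fact c * fact d)"
  "(if b > 0 then multinomial5 j a (b - 1) c d else 0)
     = of_nat b * fact (j + a + b + c + d - 1) / (fact j * fact a * fact b * fact c * fact d)"
  "(if c > 0 then multinomial5 j a b (c - 1) d else 0)
     = of_nat c * fact (j + a + b + c + d - 1) / (fact j * fact a * fact b * fact c * fact d)"
  "(if d > 0 then multinomial5 j a b c (d - 1) else 0)
     = of_nat d * fact (j + a + b + c + d - 1) / (fact j * fact a * fact b * fact c * fact d)"
  subgoal by (cases j) (simp_all add: multinomial5_def field_simps del: of_nat_Suc)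
  subgoal by (cases a) (simp_all add: multinomial5_def field_simps del: of_nat_Suc)
  subgoal by (cases b) (simp_all add: multinomial5_def field_simps del: of_nat_Suc)
  subgoal by (cases c) (simp_all add: multinomial5_def field_simps del: of_nat_Suc)
  subgoal by (cases d) (simp_all add: multinomial5_def field_simps del: of_nat_Suc)
  done

lemma multinomial5_pascal:
  assumes "j + a + b + c + d > 0"
  shows "multinomial5 j a b c d
    = (if j > 0 then multinomial5 (j - 1) a b c d else 0) + (if a > 0 then multinomial5 j (a - 1) b c d else 0)
    + (if b > 0 then multinomial5 j a (b - 1) c d else 0) + (if c > 0 then multinomial5 j a b (c - 1) d else 0)
    + (if d > 0 then multinomial5 j a b c (d - 1) else 0)"
proof -
  have "fact (j + a + b + c + d) = of_nat (j + a + b + c + d) * (fact (j + a + b + c + d - 1) :: rat)"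
    using assms by (intro fact_reduce) simp
  then show ?thesis
    unfolding multinomial5_pred
    by (simp only: multinomial5_def add_divide_distrib [symmetric] distrib_right [symmetric]
        of_nat_add [symmetric])
qed

definition inv_summand :: "rat \<Rightarrow> nat \<Rightarrow> nat \<Rightarrow> nat \<Rightarrow> nat \<Rightarrow> nat \<Rightarrow> rat" where
  "inv_summand t j a b c d = (if j \<le> a \<and> j \<le> b \<and> j \<le> c \<and> j \<le> d
     then (- t) ^ j * multinomial5 j (a - j) (b - j) (c - j) (d - j) else 0)"

lemma inv_summand_recurrence:
  assumes "\<not> (j = 0 \<and> a = 0 \<and> b = 0 \<and> c = 0 \<and> d = 0)"
  shows "inv_summand t j a b c d
    = (if a > 0 then inv_summand t j (a - 1) b c d else 0) + (if b > 0 then inv_summand t j a (b - 1) c d else 0)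
    + (if c > 0 then inv_summand t j a b (c - 1) d else 0) + (if d > 0 then inv_summand t j a b c (d - 1) else 0)
    - t * (if j > 0 \<and> a > 0 \<and> b > 0 \<and> c > 0 \<and> d > 0
           then inv_summand t (j - 1) (a - 1) (b - 1) (c - 1) (d - 1) else 0)"
proof (cases "j \<le> a \<and> j \<le> b \<and> j \<le> c \<and> j \<le> d")
  case True
  then have "j + (a - j) + (b - j) + (c - j) + (d - j) > 0" using assms by auto
  note pascal = multinomial5_pascal [OF this]
  have shift_j: "(- t) ^ j * (if j > 0 then multinomial5 (j - 1) (a - j) (b - j) (c - j) (d - j) else 0)
     = - t * (if j > 0 \<and> a > 0 \<and> b > 0 \<and> c > 0 \<and> d > 0
              then inv_summand t (j - 1) (a - 1) (b - 1) (c - 1) (d - 1) else 0)"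
    using True by (cases j) (auto simp: inv_summand_def)
  have shift_abcd:
    "(- t) ^ j * (if a - j > 0 then multinomial5 j (a - j - 1) (b - j) (c - j) (d - j) else 0)
       = (if a > 0 then inv_summand t j (a - 1) b c d else 0)"
    "(- t) ^ j * (if b - j > 0 then multinomial5 j (a - j) (b - j - 1) (c - j) (d - j) else 0)
       = (if b > 0 then inv_summand t j a (b - 1) c d else 0)"
    "(- t) ^ j * (if c - j > 0 then multinomial5 j (a - j) (b - j) (c - j - 1) (d - j) else 0)
       = (if c > 0 then inv_summand t j a b (c - 1) d else 0)"
    "(- t) ^ j * (if d - j > 0 then multinomial5 j (a - j) (b - j) (c - j) (d - j - 1) else 0)
       = (if d > 0 then inv_summand t j a b c (d - 1) else 0)"
    using True by (auto simp: inv_summand_def)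
  have "inv_summand t j a b c d = (- t) ^ j * multinomial5 j (a - j) (b - j) (c - j) (d - j)"
    using True by (simp add: inv_summand_def)
  also have "\<dots> = (- t) ^ j * (if j > 0 then multinomial5 (j - 1) (a - j) (b - j) (c - j) (d - j) else 0)
     + (- t) ^ j * (if a - j > 0 then multinomial5 j (a - j - 1) (b - j) (c - j) (d - j) else 0)
     + (- t) ^ j * (if b - j > 0 then multinomial5 j (a - j) (b - j - 1) (c - j) (d - j) else 0)
     + (- t) ^ j * (if c - j > 0 then multinomial5 j (a - j) (b - j) (c - j - 1) (d - j) else 0)
     + (- t) ^ j * (if d - j > 0 then multinomial5 j (a - j) (b - j) (c - j) (d - j - 1) else 0)"
    by (subst pascal) (simp only: ring_distribs)
  finally show ?thesis unfolding shift_j shift_abcd by simp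
next
  case False
  have vanish: "inv_summand t j' a' b' c' d' = 0"
    if "\<not> (j' \<le> a' \<and> j' \<le> b' \<and> j' \<le> c' \<and> j' \<le> d')" for j' a' b' c' d'
    unfolding inv_summand_def using that by (rule if_not_P)
  have "inv_summand t j a b c d = 0" "inv_summand t j (a - 1) b c d = 0" "inv_summand t j a (b - 1) c d = 0"
    "inv_summand t j a b (c - 1) d = 0" "inv_summand t j a b c (d - 1) = 0"
    using False by (intro vanish; linarith)+
  moreover have "(if j > 0 \<and> a > 0 \<and> b > 0 \<and> c > 0 \<and> d > 0
      then inv_summand t (j - 1) (a - 1) (b - 1) (c - 1) (d - 1) else 0) = 0"
    using False by (auto intro: vanish)
  ultimately show ?thesis by (simp only: if_cancel mult_zero_right diff_zero add_0)
qed

definition inv_coeff :: "rat \<Rightarrow> nat \<Rightarrow> nat \<Rightarrow> nat \<Rightarrow> nat \<Rightarrow> rat" where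
  "inv_coeff t a b c d = (\<Sum>j\<le>a. inv_summand t j a b c d)"

lemma inv_coeff_eq_sum:
  assumes "a \<le> N"
  shows "inv_coeff t a b c d = (\<Sum>j\<le>N. inv_summand t j a b c d)"
  unfolding inv_coeff_def using assms
  by (intro sum.mono_neutral_left) (auto simp: inv_summand_def)

lemma inv_coeff_recurrence:
  "inv_coeff t a b c d
    = (if a > 0 then inv_coeff t (a - 1) b c d else 0) + (if b > 0 then inv_coeff t a (b - 1) c d else 0)
    + (if c > 0 then inv_coeff t a b (c - 1) d else 0) + (if d > 0 then inv_coeff t a b c (d - 1) else 0)
    - t * (if a > 0 \<and> b > 0 \<and> c > 0 \<and> d > 0 then inv_coeff t (a - 1) (b - 1) (c - 1) (d - 1) else 0)
    + (if a = 0 \<and> b = 0 \<and> c = 0 \<and> d = 0 then 1 else 0)"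
proof (cases "a = 0 \<and> b = 0 \<and> c = 0 \<and> d = 0")
  case True
  then show ?thesis by (simp add: inv_coeff_def inv_summand_def multinomial5_def)
next
  case False
  have shift_a: "(if a > 0 then inv_coeff t (a - 1) b c d else 0)
      = (\<Sum>j\<le>a. if a > 0 then inv_summand t j (a - 1) b c d else 0)"
    by (auto simp: inv_coeff_eq_sum)
  have shift_bcd:
    "(if b > 0 then inv_coeff t a (b - 1) c d else 0)
      = (\<Sum>j\<le>a. if b > 0 then inv_summand t j a (b - 1) c d else 0)"
    "(if c > 0 then inv_coeff t a b (c - 1) d else 0)
      = (\<Sum>j\<le>a. if c > 0 then inv_summand t j a b (c - 1) d else 0)"
    "(if d > 0 then inv_coeff t a b c (d - 1) else 0)
      = (\<Sum>j\<le>a. if d > 0 then inv_summand t j a b c (d - 1) else 0)"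
    by (auto simp: inv_coeff_def)
  have shift_j:
    "(if a > 0 \<and> b > 0 \<and> c > 0 \<and> d > 0 then inv_coeff t (a - 1) (b - 1) (c - 1) (d - 1) else 0)
     = (\<Sum>j\<le>a. if j > 0 \<and> a > 0 \<and> b > 0 \<and> c > 0 \<and> d > 0
                then inv_summand t (j - 1) (a - 1) (b - 1) (c - 1) (d - 1) else 0)"
  proof (cases a)
    case (Suc a')
    show ?thesis unfolding Suc sum.atMost_Suc_shift by (simp add: inv_coeff_def)
  qed simp
  have "inv_coeff t a b c d = (\<Sum>j\<le>a. (if a > 0 then inv_summand t j (a - 1) b c d else 0)
    + (if b > 0 then inv_summand t j a (b - 1) c d else 0)
    + (if c > 0 then inv_summand t j a b (c - 1) d else 0) + (if d > 0 then inv_summand t j a b c (d - 1) else 0)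
    - t * (if j > 0 \<and> a > 0 \<and> b > 0 \<and> c > 0 \<and> d > 0
           then inv_summand t (j - 1) (a - 1) (b - 1) (c - 1) (d - 1) else 0))"
    unfolding inv_coeff_def using False by (intro sum.cong refl inv_summand_recurrence) auto
  then show ?thesis
    using False unfolding shift_a shift_bcd shift_j
    by (simp add: sum.distrib sum_subtractf sum_distrib_left)
qed

definition inv_series :: "rat \<Rightarrow> fps4" where
  "inv_series t = Abs_fps (\<lambda>a. Abs_fps (\<lambda>b. Abs_fps (\<lambda>c. Abs_fps (\<lambda>d. inv_coeff t a b c d))))"

lemma coeff4_inv_series [simp]: "coeff4 (inv_series t) a b c d = inv_coeff t a b c d"
  by (simp add: coeff4_def inv_series_def)

lemma inv_series_mult: "inv_series t * (1 - (X1 + X2 + X3 + X4) + const4 t * X1 * X2 * X3 * X4) = 1"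
proof -
  have "inv_series t * (1 - (X1 + X2 + X3 + X4) + const4 t * X1 * X2 * X3 * X4)
     = inv_series t - X1 * inv_series t - X2 * inv_series t - X3 * inv_series t - X4 * inv_series t
       + const4 t * (X1 * (X2 * (X3 * (X4 * inv_series t))))"
    by (simp add: algebra_simps)
  also have "\<dots> = 1"
  proof (rule coeff4_eqI)
    fix a b c d
    show "coeff4 (inv_series t - X1 * inv_series t - X2 * inv_series t - X3 * inv_series t
        - X4 * inv_series t + const4 t * (X1 * (X2 * (X3 * (X4 * inv_series t))))) a b c d = coeff4 1 a b c d"
      using inv_coeff_recurrence [of t a b c d] by simp
  qed
  finally show ?thesis .
qed

lemma coeff4_fps4_inv:
  "coeff4 (fps4_inv (1 - (X1 + X2 + X3 + X4) + const4 t * X1 * X2 * X3 * X4)) a b c d = inv_coeff t a b c d"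
  by (simp add: fps4_inv_eqI [OF inv_series_mult])

lemma creative_telescoping:
  fixes f0 f1 f2 g :: "nat \<Rightarrow> 'a :: comm_ring"
  assumes "\<And>k. p0 * f0 k + p1 * f1 k + p2 * f2 k = g (Suc k) - g k"
  shows "p0 * sum f0 {..<N} + p1 * sum f1 {..<N} + p2 * sum f2 {..<N} = g N - g 0"
proof -
  have "p0 * sum f0 {..<N} + p1 * sum f1 {..<N} + p2 * sum f2 {..<N}
      = (\<Sum>k<N. p0 * f0 k + p1 * f1 k + p2 * f2 k)"
    by (simp add: sum.distrib sum_distrib_left)
  also have "\<dots> = g N - g 0"
    unfolding assms by (rule sum_lessThan_telescope)
  finally show ?thesis .
qed

lemma three_term_recurrence_unique:
  fixes u v :: "nat \<Rightarrow> 'a :: field"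
  assumes "\<And>n. c n \<noteq> 0"
    and "\<And>n. a n * u n + b n * u (n + 1) + c n * u (n + 2) = 0"
    and "\<And>n. a n * v n + b n * v (n + 1) + c n * v (n + 2) = 0"
    and "u 0 = v 0" "u 1 = v 1"
  shows "u n = v n"
proof -
  have "u n = v n \<and> u (n + 1) = v (n + 1)"
  proof (induction n)
    case (Suc n)
    then have "c n * u (n + 2) = c n * v (n + 2)"
      using assms(2,3) [of n] by (metis add_left_cancel)
    with Suc assms(1) show ?case by simp
  qed (use assms in simp)
  then show ?thesis ..
qed

definition recurrence_op :: "(nat \<Rightarrow> rat) \<Rightarrow> nat \<Rightarrow> rat" where
  "recurrence_op u n = 81 * (of_nat n + 1) ^ 3 * u n
     + (2 * of_nat n + 3) * (7 * of_nat n ^ 2 + 21 * of_nat n + 17) * u (n + 1) + (of_nat n + 2) ^ 3 * u (n + 2)"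

definition zseq_term :: "nat \<Rightarrow> nat \<Rightarrow> rat" where
  "zseq_term n k = (if 3 * k \<le> n
     then (-3) ^ (n - 3 * k) * fact (n + k) / (fact (n - 3 * k) * fact k ^ 4) else 0)"

lemma Zseq_summand_eq:
  "(-3) powi (int n - 3 * int k) * of_nat (n choose (3 * k)) * of_nat ((n + k) choose n)
     * of_nat (fact (3 * k)) / of_nat (fact k ^ 3) = zseq_term n k"
proof (cases "3 * k \<le> n")
  case True
  have "int n - 3 * int k = int (n - 3 * k)"
    using True by simp
  then have power: "(-3 :: rat) powi (int n - 3 * int k) = (-3) ^ (n - 3 * k)"
    by (simp only: power_int_of_nat)
  have binomials: "(of_nat (n choose (3 * k)) :: rat) = fact n / (fact (3 * k) * fact (n - 3 * k))"
    "(of_nat ((n + k) choose n) :: rat) = fact (n + k) / (fact n * fact k)"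
    using True binomial_fact [of n "n + k"] by (simp_all add: binomial_fact)
  show ?thesis
    unfolding power binomials zseq_term_def using True
    by (simp add: field_simps power4_eq_xxxx power3_eq_cube)
qed (simp add: zseq_term_def)

lemma Zseq_eq_sum:
  assumes "n < N"
  shows "Zseq n = (\<Sum>k<N. zseq_term n k)"
proof -
  have "Zseq n = (\<Sum>k<Suc n. zseq_term n k)"
    unfolding Zseq_def Zseq_summand_eq by (simp add: atLeast0AtMost lessThan_Suc_atMost)
  also have "\<dots> = (\<Sum>k<N. zseq_term n k)"
    using assms by (intro sum.mono_neutral_left) (auto simp: zseq_term_def)
  finally show ?thesis .
qed

definition diag_term :: "nat \<Rightarrow> nat \<Rightarrow> rat" where
  "diag_term n m = (if m \<le> n
     then (-27) ^ (n - m) * fact (n + 3 * m) / (fact (n - m) * fact m ^ 4) else 0)"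

lemma inv_coeff_diagonal_eq_sum:
  assumes "n < N"
  shows "inv_coeff 27 n n n n = (\<Sum>m<N. diag_term n m)"
proof -
  have "inv_coeff 27 n n n n = (\<Sum>j\<in>{0..n}. inv_summand 27 j n n n n)"
    by (simp add: inv_coeff_def atLeast0AtMost)
  also have "\<dots> = (\<Sum>m\<in>{0..n}. inv_summand 27 (n - m) n n n n)"
    by (subst sum.atLeastAtMost_rev) simp
  also have "\<dots> = (\<Sum>m<Suc n. diag_term n m)"
    unfolding atLeast0AtMost lessThan_Suc_atMost [symmetric]
  proof (rule sum.cong [OF refl])
    fix m assume "m \<in> {..<Suc n}"
    then have "m \<le> n" by simp
    moreover have "n - (n - m) = m" "n - m + m + m + m + m = n + 3 * m"
      using \<open>m \<le> n\<close> by simp_all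
    ultimately show "inv_summand 27 (n - m) n n n n = diag_term n m"
      by (simp only: inv_summand_def diag_term_def multinomial5_def) (simp add: power4_eq_xxxx mult.assoc)
  qed
  also have "\<dots> = (\<Sum>m<N. diag_term n m)"
    using assms by (intro sum.mono_neutral_left) (auto simp: diag_term_def)
  finally show ?thesis .
qed

text \<open>
  The term ratios are stated multiplicatively so that they also hold at the edge of the support,
  where one side vanishes.
\<close>

lemma zseq_term_Suc_left:
  "zseq_term (N + 1) k * (of_nat N + 1 - 3 * of_nat k) = -3 * (of_nat N + of_nat k + 1) * zseq_term N k"
proof (cases "3 * k \<le> N")
  case True
  then obtain r where r: "N = 3 * k + r" using le_Suc_ex by blast
  have "3 * k + r + 1 - 3 * k = Suc r" "3 * k + r + 1 + k = Suc (3 * k + r + k)" "3 * k + r - 3 * k = r"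
    by simp_all
  then show ?thesis
    unfolding r zseq_term_def
    by (simp del: of_nat_Suc add: fact_Suc) (simp add: divide_simps, simp add: algebra_simps)
next
  case False
  then have "3 * k = N + 1 \<or> \<not> 3 * k \<le> N + 1" by linarith
  then show ?thesis
    by (elim disjE) (auto simp: zseq_term_def False simp flip: of_nat_Suc)
qed

lemma zseq_term_Suc_right:
  "27 * (of_nat k + 1) ^ 4 * zseq_term N (k + 1) = - (of_nat N + of_nat k + 1) * (of_nat N - 3 * of_nat k)
     * (of_nat N - 3 * of_nat k - 1) * (of_nat N - 3 * of_nat k - 2) * zseq_term N k"
proof (cases "3 * k + 3 \<le> N")
  case True
  then obtain r where r: "N = 3 * k + 3 + r" using le_Suc_ex by blast
  have "3 * k + 3 + r + (k + 1) = Suc (3 * k + 3 + r + k)" "3 * k + 3 + r - 3 * k = Suc (Suc (Suc r))"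
    "3 * k + 3 + r - 3 * (k + 1) = r" "k + 1 = Suc k" "3 * k \<le> 3 * k + 3 + r" "3 * (k + 1) \<le> 3 * k + 3 + r"
    by simp_all
  then show ?thesis
    unfolding r zseq_term_def by (simp only: fact_Suc power_Suc if_True)
      (simp add: divide_simps, simp add: algebra_simps)
next
  case False
  then have "N = 3 * k \<or> N = 3 * k + 1 \<or> N = 3 * k + 2 \<or> \<not> 3 * k \<le> N" by linarith
  with False show ?thesis by (elim disjE) (simp_all add: zseq_term_def)
qed

lemma diag_term_Suc_left:
  "diag_term (N + 1) m * (of_nat N + 1 - of_nat m) = -27 * (of_nat N + 3 * of_nat m + 1) * diag_term N m"
proof (cases "m \<le> N")
  case True
  then obtain r where r: "N = m + r" using le_Suc_ex by blast
  have "m + r + 1 - m = Suc r" "m + r + 1 + 3 * m = Suc (m + r + 3 * m)" "m + r - m = r"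
    by simp_all
  then show ?thesis
    unfolding r diag_term_def
    by (simp del: of_nat_Suc add: fact_Suc) (simp add: divide_simps, simp add: algebra_simps)
next
  case False
  then have "m = N + 1 \<or> \<not> m \<le> N + 1" by linarith
  then show ?thesis
    by (elim disjE) (auto simp: diag_term_def False)
qed

lemma diag_term_Suc_right:
  "-27 * (of_nat m + 1) ^ 4 * diag_term N (m + 1) = (of_nat N + 3 * of_nat m + 1) * (of_nat N + 3 * of_nat m + 2)
     * (of_nat N + 3 * of_nat m + 3) * (of_nat N - of_nat m) * diag_term N m"
proof (cases "m + 1 \<le> N")
  case True
  then obtain r where r: "N = m + 1 + r" using le_Suc_ex by blast
  have "m + 1 + r + 3 * (m + 1) = Suc (Suc (Suc (m + 1 + r + 3 * m)))" "m + 1 + r - m = Suc r"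
    "m + 1 + r - (m + 1) = r" "m + 1 = Suc m" "m \<le> m + 1 + r" "m + 1 \<le> m + 1 + r"
    by simp_all
  then show ?thesis
    unfolding r diag_term_def by (simp only: fact_Suc power_Suc if_True)
      (simp add: divide_simps, simp add: algebra_simps)
next
  case False
  then have "N = m \<or> \<not> m \<le> N" by linarith
  with False show ?thesis by (elim disjE) (simp_all add: diag_term_def)
qed

definition zseq_certificate :: "nat \<Rightarrow> nat \<Rightarrow> rat" where
  "zseq_certificate n k = -36 * (4 * of_nat n + 5) * of_nat k ^ 4 * zseq_term (n + 2) k
     / ((of_nat n + of_nat k + 1) * (of_nat n + of_nat k + 2))"

text \<open>
  By the term ratios, every term of the telescoping identity is a rational multiple of
  W = zseq_term (n + 2) k (resp. diag_term (n + 2) m); these are the identities between the multipliers.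
\<close>

lemma zseq_certificate_rational_identity:
  fixes x y W :: rat
  assumes "x \<ge> 0" "y \<ge> 0"
  shows "81 * (x + 1) ^ 3 * (- (x + 1 - 3 * y) / (3 * (x + y + 1)) * (- (x + 2 - 3 * y) / (3 * (x + y + 2)) * W))
    + (2 * x + 3) * (7 * x ^ 2 + 21 * x + 17) * (- (x + 2 - 3 * y) / (3 * (x + y + 2)) * W) + (x + 2) ^ 3 * W
   = -36 * (4 * x + 5) * (y + 1) ^ 4 * (- (x + y + 3) * (x + 2 - 3 * y) * (x + 1 - 3 * y) * (x - 3 * y)
        / (27 * (y + 1) ^ 4) * W) / ((x + y + 2) * (x + y + 3))
     - -36 * (4 * x + 5) * y ^ 4 * W / ((x + y + 1) * (x + y + 2))"
proof -
  define u v z t a b c p q where "u = x + y + 1" and "v = x + y + 2" and "z = x + y + 3" and "t = y + 1"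
    and "a = x + 1 - 3 * y" and "b = x + 2 - 3 * y" and "c = x - 3 * y"
    and "p = (2 * x + 3) * (7 * x ^ 2 + 21 * x + 17)" and "q = 4 * x + 5"
  have nonzero: "u \<noteq> 0" "v \<noteq> 0" "z \<noteq> 0" "t \<noteq> 0"
    unfolding u_def v_def z_def t_def using assms by linarith+
  have numerator: "27 * (x + 1) ^ 3 * a * b - p * b * u + 3 * (x + 2) ^ 3 * u * v
      = 4 * q * a * b * c * u + 108 * q * y ^ 4"
    unfolding a_def b_def c_def u_def v_def p_def q_def
    by (simp add: algebra_simps power2_eq_square power3_eq_cube power4_eq_xxxx)
  have "81 * (x + 1) ^ 3 * (- a / (3 * u) * (- b / (3 * v) * W)) + p * (- b / (3 * v) * W) + (x + 2) ^ 3 * W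
     = (27 * (x + 1) ^ 3 * a * b - p * b * u + 3 * (x + 2) ^ 3 * u * v) * W / (3 * u * v)"
    using nonzero by (simp add: field_simps)
  also have "\<dots> = (4 * q * a * b * c * u + 108 * q * y ^ 4) * W / (3 * u * v)"
    unfolding numerator ..
  also have "\<dots> = -36 * q * t ^ 4 * (- z * b * a * c / (27 * t ^ 4) * W) / (v * z)
      - -36 * q * y ^ 4 * W / (u * v)"
    using nonzero by (simp add: field_simps)
  finally show ?thesis
    unfolding u_def v_def z_def t_def a_def b_def c_def p_def q_def .
qed

lemma zseq_term_telescoping:
  "recurrence_op (\<lambda>n. zseq_term n k) n = zseq_certificate n (Suc k) - zseq_certificate n k"
proof -
  define x y where "x = (of_nat n :: rat)" and "y = (of_nat k :: rat)"
  have nonneg: "x \<ge> 0" "y \<ge> 0" unfolding x_def y_def by simp_all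
  then have nonzero: "x + y + 1 \<noteq> 0" "x + y + 2 \<noteq> 0" "y + 1 \<noteq> 0" by linarith+
  have "zseq_term (n + 2) k * (x + 2 - 3 * y) = -3 * (x + y + 2) * zseq_term (n + 1) k"
    using zseq_term_Suc_left [of "n + 1" k] unfolding x_def y_def by (simp add: algebra_simps)
  then have step_n1: "zseq_term (n + 1) k = - (x + 2 - 3 * y) / (3 * (x + y + 2)) * zseq_term (n + 2) k"
    using nonzero by (simp add: field_simps)
  have "zseq_term (n + 1) k * (x + 1 - 3 * y) = -3 * (x + y + 1) * zseq_term n k"
    using zseq_term_Suc_left [of n k] unfolding x_def y_def by (simp add: algebra_simps)
  then have step_n0: "zseq_term n k = - (x + 1 - 3 * y) / (3 * (x + y + 1)) * zseq_term (n + 1) k"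
    using nonzero by (simp add: field_simps)
  have "27 * (y + 1) ^ 4 * zseq_term (n + 2) (k + 1)
      = - (x + 2 + y + 1) * (x + 2 - 3 * y) * (x + 2 - 3 * y - 1) * (x + 2 - 3 * y - 2) * zseq_term (n + 2) k"
    using zseq_term_Suc_right [of k "n + 2"] unfolding x_def y_def by (simp add: algebra_simps)
  then have step_k: "zseq_term (n + 2) (Suc k)
      = - (x + y + 3) * (x + 2 - 3 * y) * (x + 1 - 3 * y) * (x - 3 * y) / (27 * (y + 1) ^ 4) * zseq_term (n + 2) k"
    using nonzero by (simp add: field_simps)
  have "zseq_certificate n (Suc k)
      = -36 * (4 * x + 5) * (y + 1) ^ 4 * zseq_term (n + 2) (Suc k) / ((x + y + 2) * (x + y + 3))"
    and "zseq_certificate n k = -36 * (4 * x + 5) * y ^ 4 * zseq_term (n + 2) k / ((x + y + 1) * (x + y + 2))"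
    unfolding zseq_certificate_def x_def y_def by (simp_all add: algebra_simps)
  then show ?thesis
    unfolding recurrence_op_def x_def [symmetric] step_k step_n0 step_n1
    using zseq_certificate_rational_identity [OF nonneg] by simp
qed

lemma Zseq_recurrence: "recurrence_op Zseq n = 0"
proof -
  have "81 * (of_nat n + 1) ^ 3 * sum (zseq_term n) {..<n + 3}
      + (2 * of_nat n + 3) * (7 * of_nat n ^ 2 + 21 * of_nat n + 17) * sum (zseq_term (n + 1)) {..<n + 3}
      + (of_nat n + 2) ^ 3 * sum (zseq_term (n + 2)) {..<n + 3}
      = zseq_certificate n (n + 3) - zseq_certificate n 0"
    by (rule creative_telescoping) (rule zseq_term_telescoping [unfolded recurrence_op_def])
  then show ?thesis
    by (simp add: recurrence_op_def Zseq_eq_sum [of _ "n + 3"] zseq_certificate_def zseq_term_def)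
qed

definition diag_certificate :: "nat \<Rightarrow> nat \<Rightarrow> rat" where
  "diag_certificate n m = -4 * (4 * of_nat n + 7) * of_nat m ^ 4 * diag_term (n + 2) m
     / ((of_nat n + 3 * of_nat m + 1) * (of_nat n + 3 * of_nat m + 2))"

lemma diag_certificate_rational_identity:
  fixes x y W :: rat
  assumes "x \<ge> 0" "y \<ge> 0"
  shows "81 * (x + 1) ^ 3 * (- (x + 1 - y) / (27 * (x + 3 * y + 1)) * (- (x + 2 - y) / (27 * (x + 3 * y + 2)) * W))
    + (2 * x + 3) * (7 * x ^ 2 + 21 * x + 17) * (- (x + 2 - y) / (27 * (x + 3 * y + 2)) * W) + (x + 2) ^ 3 * W
   = -4 * (4 * x + 7) * (y + 1) ^ 4 * (- (x + 3 * y + 3) * (x + 3 * y + 4) * (x + 3 * y + 5) * (x + 2 - y)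
        / (27 * (y + 1) ^ 4) * W) / ((x + 3 * y + 4) * (x + 3 * y + 5))
     - -4 * (4 * x + 7) * y ^ 4 * W / ((x + 3 * y + 1) * (x + 3 * y + 2))"
proof -
  define u v z z4 z5 t a b p q where "u = x + 3 * y + 1" and "v = x + 3 * y + 2" and "z = x + 3 * y + 3"
    and "z4 = x + 3 * y + 4" and "z5 = x + 3 * y + 5" and "t = y + 1" and "a = x + 1 - y" and "b = x + 2 - y"
    and "p = (2 * x + 3) * (7 * x ^ 2 + 21 * x + 17)" and "q = 4 * x + 7"
  have nonzero: "u \<noteq> 0" "v \<noteq> 0" "z4 \<noteq> 0" "z5 \<noteq> 0" "t \<noteq> 0"
    unfolding u_def v_def z4_def z5_def t_def using assms by linarith+
  have numerator: "3 * (x + 1) ^ 3 * a * b - p * b * u + 27 * (x + 2) ^ 3 * u * v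
      = 4 * q * z * b * u * v + 108 * q * y ^ 4"
    unfolding a_def b_def z_def u_def v_def p_def q_def
    by (simp add: algebra_simps power2_eq_square power3_eq_cube power4_eq_xxxx)
  have "81 * (x + 1) ^ 3 * (- a / (27 * u) * (- b / (27 * v) * W)) + p * (- b / (27 * v) * W) + (x + 2) ^ 3 * W
     = (3 * (x + 1) ^ 3 * a * b - p * b * u + 27 * (x + 2) ^ 3 * u * v) * W / (27 * u * v)"
    using nonzero by (simp add: field_simps)
  also have "\<dots> = (4 * q * z * b * u * v + 108 * q * y ^ 4) * W / (27 * u * v)"
    unfolding numerator ..
  also have "\<dots> = -4 * q * t ^ 4 * (- z * z4 * z5 * b / (27 * t ^ 4) * W) / (z4 * z5)
      - -4 * q * y ^ 4 * W / (u * v)"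
    using nonzero by (simp add: field_simps)
  finally show ?thesis
    unfolding u_def v_def z_def z4_def z5_def t_def a_def b_def p_def q_def .
qed

lemma diag_term_telescoping:
  "recurrence_op (\<lambda>n. diag_term n m) n = diag_certificate n (Suc m) - diag_certificate n m"
proof -
  define x y where "x = (of_nat n :: rat)" and "y = (of_nat m :: rat)"
  have nonneg: "x \<ge> 0" "y \<ge> 0" unfolding x_def y_def by simp_all
  then have nonzero: "x + 3 * y + 1 \<noteq> 0" "x + 3 * y + 2 \<noteq> 0" "y + 1 \<noteq> 0" by linarith+
  have "diag_term (n + 2) m * (x + 2 - y) = -27 * (x + 3 * y + 2) * diag_term (n + 1) m"
    using diag_term_Suc_left [of "n + 1" m] unfolding x_def y_def by (simp add: algebra_simps)
  then have step_n1: "diag_term (n + 1) m = - (x + 2 - y) / (27 * (x + 3 * y + 2)) * diag_term (n + 2) m"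
    using nonzero by (simp add: field_simps)
  have "diag_term (n + 1) m * (x + 1 - y) = -27 * (x + 3 * y + 1) * diag_term n m"
    using diag_term_Suc_left [of n m] unfolding x_def y_def by (simp add: algebra_simps)
  then have step_n0: "diag_term n m = - (x + 1 - y) / (27 * (x + 3 * y + 1)) * diag_term (n + 1) m"
    using nonzero by (simp add: field_simps)
  have "-27 * (y + 1) ^ 4 * diag_term (n + 2) (m + 1)
      = (x + 3 * y + 3) * (x + 3 * y + 4) * (x + 3 * y + 5) * (x + 2 - y) * diag_term (n + 2) m"
    using diag_term_Suc_right [of m "n + 2"] unfolding x_def y_def by (simp add: algebra_simps)
  then have step_m: "diag_term (n + 2) (Suc m)
      = - (x + 3 * y + 3) * (x + 3 * y + 4) * (x + 3 * y + 5) * (x + 2 - y) / (27 * (y + 1) ^ 4) * diag_term (n + 2) m"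
    using nonzero by (simp add: field_simps)
  have "diag_certificate n (Suc m)
      = -4 * (4 * x + 7) * (y + 1) ^ 4 * diag_term (n + 2) (Suc m) / ((x + 3 * y + 4) * (x + 3 * y + 5))"
    and "diag_certificate n m
      = -4 * (4 * x + 7) * y ^ 4 * diag_term (n + 2) m / ((x + 3 * y + 1) * (x + 3 * y + 2))"
    unfolding diag_certificate_def x_def y_def by (simp_all add: algebra_simps)
  then show ?thesis
    unfolding recurrence_op_def x_def [symmetric] step_m step_n0 step_n1
    using diag_certificate_rational_identity [OF nonneg] by simp
qed

lemma inv_coeff_diagonal_recurrence: "recurrence_op (\<lambda>n. inv_coeff 27 n n n n) n = 0"
proof -
  have "81 * (of_nat n + 1) ^ 3 * sum (diag_term n) {..<n + 3}
      + (2 * of_nat n + 3) * (7 * of_nat n ^ 2 + 21 * of_nat n + 17) * sum (diag_term (n + 1)) {..<n + 3}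
      + (of_nat n + 2) ^ 3 * sum (diag_term (n + 2)) {..<n + 3}
      = diag_certificate n (n + 3) - diag_certificate n 0"
    by (rule creative_telescoping) (rule diag_term_telescoping [unfolded recurrence_op_def])
  then show ?thesis
    by (simp add: recurrence_op_def inv_coeff_diagonal_eq_sum [of _ "n + 3"] diag_certificate_def
        diag_term_def)
qed

theorem mainTheorem9:
  fixes n :: nat
  shows "coeff4 (fps4_inv (1 - (X1 + X2 + X3 + X4) + 27 * X1 * X2 * X3 * X4)) n n n n = Zseq n"
proof -
  have "(27 :: fps4) = const4 27"
    by (simp add: numeral_fps_const)
  then have "coeff4 (fps4_inv (1 - (X1 + X2 + X3 + X4) + 27 * X1 * X2 * X3 * X4)) n n n n
      = inv_coeff 27 n n n n"
    by (simp only: coeff4_fps4_inv)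
  also have "\<dots> = Zseq n"
  proof (rule three_term_recurrence_unique [where a = "\<lambda>n. 81 * (of_nat n + 1) ^ 3"
        and b = "\<lambda>n. (2 * of_nat n + 3) * (7 * of_nat n ^ 2 + 21 * of_nat n + 17)"
        and c = "\<lambda>n. (of_nat n + 2) ^ 3"])
    show "inv_coeff 27 0 0 0 0 = Zseq 0" "inv_coeff 27 1 1 1 1 = Zseq 1"
      by (simp_all add: inv_coeff_def inv_summand_def multinomial5_def Zseq_def fact_numeral)
  qed (use inv_coeff_diagonal_recurrence Zseq_recurrence
       in \<open>simp_all add: recurrence_op_def add_nonneg_pos\<close>)
  finally show ?thesis .
qed

end
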